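(* Let $n\ge2$, $h=0$ and $\epsilon\in[-1,1]$. For $0\le p\le 2n$, $$\min_{\sigma\in\mathcal C(p)}H(\sigma)=\begin{cases}n-(p-n)^2-p^2-\epsilon(n-2p) & 0\le p\le n,\\ n-(2n-p)^2-(p-n)^2-\epsilon(2p-3n) & n\le p\le 2n.\end{cases}$$ Moreover, for $0\le p\le n$ this minimum is attained on $C(p,0,0)$ and on $C(0,p,0)$, and for $n\le p\le 2n$ it is attained on $C(n,p-n,p-n)$ and on $C(p-n,n,p-n)$.
   Context: The graph $\mathcal G(2,n)$ has vertex set $V=V^{(1)}\cup V^{(2)}$ with $V^{(1)}=\{1,\dots,n\}$, $V^{(2)}=\{n+1,\dots,2n\}$; its edge set is $E=E_{\mathrm{int}}\cup E_{\mathrm{cross}}$, where $E_{\mathrm{int}}$ consists of all pairs of distinct vertices in the same $V^{(k)}$ and $E_{\mathrm{cross}}=\{\{i,i+n\}:1\le i\le n\}$. For $\sigma\in\{-1,+1\}^V$, $H(\sigma)=-\sum_{\{i,j\}\in E_{\mathrm{int}}}\sigma_i\sigma_j-\epsilon\sum_{\{i,j\}\in E_{\mathrm{cross}}}\sigma_i\sigma_j-h\sum_{i\in V}\sigma_i$. $C(p_1,p_2,a)$ is the set of configurations with exactly $p_1$ vertices of spin $+1$ in $V^{(1)}$, exactly $p_2$ vertices of spin $+1$ in $V^{(2)}$, and exactly $a$ cross-edges both of whose endpoints have spin $+1$. $\mathcal C(p)$ is the set of configurations with exactly $p$ vertices of spin $+1$ in $V$. *)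

theory Defs
  imports Complex_Main
begin

definition V1 :: "nat \<Rightarrow> nat set" where "V1 n = {1..n}"
definition V2 :: "nat \<Rightarrow> nat set" where "V2 n = {n+1..2*n}"
definition V :: "nat \<Rightarrow> nat set" where "V n = V1 n \<union> V2 n"

definition E_int :: "nat \<Rightarrow> nat set set" where
  "E_int n = {{i, j} | i j. i \<noteq> j \<and> ((i \<in> V1 n \<and> j \<in> V1 n) \<or> (i \<in> V2 n \<and> j \<in> V2 n))}"

definition E_cross :: "nat \<Rightarrow> nat set set" where
  "E_cross n = {{i, i + n} | i. i \<in> {1..n}}"

text \<open>Configurations: spin functions V -> {-1,1}, extended by 0 outside V (so that the sets are finite).\<close>
definition configs :: "nat \<Rightarrow> (nat \<Rightarrow> real) set" where
  "configs n = {\<sigma>. (\<forall>i \<in> V n. \<sigma> i = -1 \<or> \<sigma> i = 1) \<and> (\<forall>i. i \<notin> V n \<longrightarrow> \<sigma> i = 0)}"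

definition H :: "nat \<Rightarrow> real \<Rightarrow> real \<Rightarrow> (nat \<Rightarrow> real) \<Rightarrow> real" where
  "H n \<epsilon> h \<sigma> = - (\<Sum>e \<in> E_int n. \<Prod>i \<in> e. \<sigma> i) - \<epsilon> * (\<Sum>e \<in> E_cross n. \<Prod>i \<in> e. \<sigma> i)
      - h * (\<Sum>i \<in> V n. \<sigma> i)"

definition C3 :: "nat \<Rightarrow> nat \<Rightarrow> nat \<Rightarrow> nat \<Rightarrow> (nat \<Rightarrow> real) set" where
  "C3 n p1 p2 a = {\<sigma> \<in> configs n. card {i \<in> V1 n. \<sigma> i = 1} = p1 \<and> card {i \<in> V2 n. \<sigma> i = 1} = p2
      \<and> card {e \<in> E_cross n. \<forall>i \<in> e. \<sigma> i = 1} = a}"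

definition Cp :: "nat \<Rightarrow> nat \<Rightarrow> (nat \<Rightarrow> real) set" where
  "Cp n p = {\<sigma> \<in> configs n. card {i \<in> V n. \<sigma> i = 1} = p}"

end

theory Submission
  imports Defs
begin

text \<open>At zero field the energy of a configuration depends only on the numbers \<open>p1\<close>, \<open>p2\<close> of
up spins in the two blocks and the number \<open>a\<close> of up-up cross edges: a block with \<open>p\<^sub>k\<close> up spins
contributes \<open>-((2p\<^sub>k - n)\<^sup>2 - n)/2\<close> and the matching contributes \<open>-\<epsilon>(n - 2p1 - 2p2 + 4a)\<close>.
For fixed \<open>p = p1 + p2 \<le> n\<close> this is the claimed minimum plus \<open>4 p1 p2 - 4\<epsilon>a\<close>, which is
nonnegative since \<open>a \<le> min p1 p2\<close> and \<open>\<epsilon> \<le> 1\<close>.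
For \<open>p \<ge> n\<close>, flipping all spins preserves the energy and complements the counts, which reduces
to the case \<open>2n - p \<le> n\<close>. Every feasible triple of counts is realised by a configuration.\<close>

definition pairs :: "'a set \<Rightarrow> 'a set set" where
  "pairs A = {{i, j} | i j. i \<noteq> j \<and> i \<in> A \<and> j \<in> A}"

lemma pairs_insert: "x \<notin> A \<Longrightarrow> pairs (insert x A) = pairs A \<union> (\<lambda>j. {x, j}) ` A"
  unfolding pairs_def by auto

lemma finite_pairs: "finite A \<Longrightarrow> finite (pairs A)"
  by (rule finite_subset[of _ "Pow A"]) (auto simp: pairs_def)

lemma pairs_disjoint: "A \<inter> B = {} \<Longrightarrow> pairs A \<inter> pairs B = {}"
  unfolding pairs_def by (auto simp: doubleton_eq_iff)

lemma sum_prod_pairs: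
  fixes f :: "'a \<Rightarrow> 'b::comm_ring_1"
  assumes "finite A"
  shows "2 * (\<Sum>e\<in>pairs A. \<Prod>i\<in>e. f i) = (\<Sum>i\<in>A. f i)^2 - (\<Sum>i\<in>A. (f i)^2)"
  using assms
proof (induction A rule: finite_induct)
  case empty
  then show ?case by (simp add: pairs_def)
next
  case (insert x A)
  have disjoint: "pairs A \<inter> (\<lambda>j. {x, j}) ` A = {}"
    using insert.hyps(2) by (auto simp: pairs_def doubleton_eq_iff)
  have inj: "inj_on (\<lambda>j. {x, j}) A"
    using insert.hyps(2) by (auto simp: inj_on_def doubleton_eq_iff)
  have "(\<Sum>e\<in>(\<lambda>j. {x, j}) ` A. \<Prod>i\<in>e. f i) = (\<Sum>j\<in>A. f x * f j)"
    unfolding sum.reindex[OF inj] comp_def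
  proof (rule sum.cong)
    fix j assume "j \<in> A"
    then have "x \<noteq> j" using insert.hyps(2) by auto
    then show "(\<Prod>i\<in>{x, j}. f i) = f x * f j" by simp
  qed simp
  then have "(\<Sum>e\<in>pairs (insert x A). \<Prod>i\<in>e. f i) = (\<Sum>e\<in>pairs A. \<Prod>i\<in>e. f i) + f x * (\<Sum>j\<in>A. f j)"
    unfolding pairs_insert[OF insert.hyps(2)]
    by (subst sum.union_disjoint) (use insert.hyps(1) finite_pairs disjoint in \<open>auto simp: sum_distrib_left\<close>)
  then show ?case
    using insert by (simp add: power2_eq_square algebra_simps)
qed

lemma sum_spins:
  fixes s :: "'a \<Rightarrow> real"
  assumes "finite A" and "\<forall>i\<in>A. s i = -1 \<or> s i = 1"
  shows "(\<Sum>i\<in>A. s i) = 2 * real (card {i\<in>A. s i = 1}) - real (card A)"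
proof -
  have "(\<Sum>i\<in>A. s i) = (\<Sum>i\<in>A. 2 * (if s i = 1 then 1 else 0) - 1)"
    using assms(2) by (intro sum.cong) auto
  then show ?thesis
    using assms(1) by (simp add: sum_subtractf sum_distrib_left[symmetric] sum.inter_filter[symmetric])
qed

lemma sum_spins_squared:
  fixes s :: "'a \<Rightarrow> real"
  assumes "\<forall>i\<in>A. s i = -1 \<or> s i = 1"
  shows "(\<Sum>i\<in>A. (s i)^2) = real (card A)"
proof -
  have "(\<Sum>i\<in>A. (s i)^2) = (\<Sum>i\<in>A. 1)"
    using assms by (intro sum.cong) auto
  then show ?thesis by simp
qed

lemma configs_spin: "\<sigma> \<in> configs n \<Longrightarrow> i \<in> V n \<Longrightarrow> \<sigma> i = -1 \<or> \<sigma> i = 1"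
  by (simp add: configs_def)

lemma V1_V2_disjoint: "V1 n \<inter> V2 n = {}"
  by (auto simp: V1_def V2_def)

lemma E_int_eq_pairs: "E_int n = pairs (V1 n) \<union> pairs (V2 n)"
  unfolding E_int_def pairs_def by blast

lemma E_cross_eq_image: "E_cross n = (\<lambda>i. {i, i + n}) ` {1..n}"
  unfolding E_cross_def by auto

lemma inj_on_cross_edge: "inj_on (\<lambda>i. {i, i + n}) (A :: nat set)"
proof (rule inj_onI)
  fix x y assume "{x, x + n} = {y, y + n}"
  then have "x = y \<or> x = y + n" and "y = x \<or> y = x + n"
    by (metis insertI1 insertE singletonD)+
  then show "x = y" by presburger
qed

abbreviation plus_V1 :: "nat \<Rightarrow> (nat \<Rightarrow> real) \<Rightarrow> nat" where
  "plus_V1 n \<sigma> \<equiv> card {i \<in> V1 n. \<sigma> i = 1}"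

abbreviation plus_V2 :: "nat \<Rightarrow> (nat \<Rightarrow> real) \<Rightarrow> nat" where
  "plus_V2 n \<sigma> \<equiv> card {i \<in> V2 n. \<sigma> i = 1}"

abbreviation plus_cross :: "nat \<Rightarrow> (nat \<Rightarrow> real) \<Rightarrow> nat" where
  "plus_cross n \<sigma> \<equiv> card {e \<in> E_cross n. \<forall>i \<in> e. \<sigma> i = 1}"

lemma plus_V2_shift: "plus_V2 n \<sigma> = card {i \<in> {1..n}. \<sigma> (i + n) = 1}"
proof -
  have "{i \<in> V2 n. \<sigma> i = 1} = (\<lambda>i. i + n) ` {i \<in> {1..n}. \<sigma> (i + n) = 1}"
  proof (rule set_eqI, rule iffI)
    fix j assume "j \<in> {i \<in> V2 n. \<sigma> i = 1}"
    then have "j - n \<in> {i \<in> {1..n}. \<sigma> (i + n) = 1}" and "j = (j - n) + n"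
      by (auto simp: V2_def)
    then show "j \<in> (\<lambda>i. i + n) ` {i \<in> {1..n}. \<sigma> (i + n) = 1}" by blast
  qed (auto simp: V2_def)
  then show ?thesis by (simp add: card_image)
qed

lemma plus_cross_shift: "plus_cross n \<sigma> = card {i \<in> {1..n}. \<sigma> i = 1 \<and> \<sigma> (i + n) = 1}"
proof -
  have "{e \<in> E_cross n. \<forall>i \<in> e. \<sigma> i = 1} = (\<lambda>i. {i, i + n}) ` {i \<in> {1..n}. \<sigma> i = 1 \<and> \<sigma> (i + n) = 1}"
    unfolding E_cross_eq_image by auto
  then show ?thesis by (simp add: card_image[OF inj_on_cross_edge])
qed

lemma card_plus_V: "card {i \<in> V n. \<sigma> i = 1} = plus_V1 n \<sigma> + plus_V2 n \<sigma>"
proof -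
  have "{i \<in> V n. \<sigma> i = 1} = {i \<in> V1 n. \<sigma> i = 1} \<union> {i \<in> V2 n. \<sigma> i = 1}"
    by (auto simp: V_def)
  then show ?thesis
    using V1_V2_disjoint by (simp add: card_Un_disjoint disjoint_iff V1_def V2_def)
qed

lemma sum_cross_spins:
  assumes "\<sigma> \<in> configs n" and "n \<ge> 1"
  shows "(\<Sum>e\<in>E_cross n. \<Prod>i\<in>e. \<sigma> i)
    = 4 * real (plus_cross n \<sigma>) - 2 * real (plus_V1 n \<sigma>) - 2 * real (plus_V2 n \<sigma>) + real n"
proof -
  let ?up = "\<lambda>P. if P then 1 else (0::real)"
  have "(\<Sum>e\<in>E_cross n. \<Prod>i\<in>e. \<sigma> i) = (\<Sum>i\<in>{1..n}. \<Prod>j\<in>{i, i + n}. \<sigma> j)"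
    unfolding E_cross_eq_image by (simp add: sum.reindex[OF inj_on_cross_edge])
  also have "\<dots> = (\<Sum>i\<in>{1..n}. 4 * ?up (\<sigma> i = 1 \<and> \<sigma> (i + n) = 1) - 2 * ?up (\<sigma> i = 1)
      - 2 * ?up (\<sigma> (i + n) = 1) + 1)"
  proof (rule sum.cong)
    fix i assume "i \<in> {1..n}"
    then have "i \<in> V n" and "i + n \<in> V n" and "i \<noteq> i + n"
      using assms(2) by (auto simp: V_def V1_def V2_def)
    then show "(\<Prod>j\<in>{i, i + n}. \<sigma> j) = 4 * ?up (\<sigma> i = 1 \<and> \<sigma> (i + n) = 1) - 2 * ?up (\<sigma> i = 1)
      - 2 * ?up (\<sigma> (i + n) = 1) + 1"
      using configs_spin[OF assms(1), of i] configs_spin[OF assms(1), of "i + n"] by auto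
  qed simp
  also have "\<dots> = 4 * real (plus_cross n \<sigma>) - 2 * real (plus_V1 n \<sigma>) - 2 * real (plus_V2 n \<sigma>) + real n"
    unfolding plus_cross_shift plus_V2_shift V1_def
    by (simp add: sum.distrib sum_subtractf sum_distrib_left[symmetric] sum.inter_filter[symmetric])
  finally show ?thesis .
qed

lemma sum_int_spins:
  assumes "\<sigma> \<in> configs n"
  shows "2 * (\<Sum>e\<in>E_int n. \<Prod>i\<in>e. \<sigma> i)
    = (2 * real (plus_V1 n \<sigma>) - real n)^2 + (2 * real (plus_V2 n \<sigma>) - real n)^2 - 2 * real n"
proof -
  have block: "2 * (\<Sum>e\<in>pairs B. \<Prod>i\<in>e. \<sigma> i) = (2 * real (card {i \<in> B. \<sigma> i = 1}) - real n)^2 - real n"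
    if "B \<subseteq> V n" "finite B" "card B = n" for B
  proof -
    have spins: "\<forall>i\<in>B. \<sigma> i = -1 \<or> \<sigma> i = 1"
      using configs_spin[OF assms] that(1) by blast
    show ?thesis
      using sum_prod_pairs[OF that(2), of \<sigma>] sum_spins[OF that(2) spins] sum_spins_squared[OF spins] that(3)
      by simp
  qed
  have "(\<Sum>e\<in>E_int n. \<Prod>i\<in>e. \<sigma> i) = (\<Sum>e\<in>pairs (V1 n). \<Prod>i\<in>e. \<sigma> i) + (\<Sum>e\<in>pairs (V2 n). \<Prod>i\<in>e. \<sigma> i)"
    unfolding E_int_eq_pairs
    by (rule sum.union_disjoint) (use finite_pairs pairs_disjoint[OF V1_V2_disjoint] in \<open>auto simp: V1_def V2_def\<close>)
  then show ?thesis
    using block[of "V1 n"] block[of "V2 n"] by (simp add: V_def V1_def V2_def algebra_simps)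
qed

definition energy_of_counts :: "nat \<Rightarrow> real \<Rightarrow> nat \<Rightarrow> nat \<Rightarrow> nat \<Rightarrow> real" where
  "energy_of_counts n \<epsilon> p1 p2 a = real n - ((2 * real p1 - real n)^2 + (2 * real p2 - real n)^2) / 2
     - \<epsilon> * (real n - 2 * real p1 - 2 * real p2 + 4 * real a)"

lemma H_eq_energy_of_counts:
  assumes "\<sigma> \<in> configs n" and "n \<ge> 1"
  shows "H n \<epsilon> 0 \<sigma> = energy_of_counts n \<epsilon> (plus_V1 n \<sigma>) (plus_V2 n \<sigma>) (plus_cross n \<sigma>)"
  unfolding H_def energy_of_counts_def sum_cross_spins[OF assms]
  using sum_int_spins[OF assms(1)] by (simp add: field_simps)

definition feasible_counts :: "nat \<Rightarrow> nat \<Rightarrow> nat \<Rightarrow> nat \<Rightarrow> bool" where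
  "feasible_counts n p1 p2 a \<longleftrightarrow> a \<le> p1 \<and> a \<le> p2 \<and> p1 \<le> n \<and> p2 \<le> n \<and> p1 + p2 \<le> n + a"

lemma feasible_counts_of_config: "feasible_counts n (plus_V1 n \<sigma>) (plus_V2 n \<sigma>) (plus_cross n \<sigma>)"
proof -
  let ?A = "{i \<in> {1..n}. \<sigma> i = 1}" and ?B = "{i \<in> {1..n}. \<sigma> (i + n) = 1}"
  have "card ?A + card ?B = card (?A \<union> ?B) + card (?A \<inter> ?B)"
    by (rule card_Un_Int) auto
  moreover have "card (?A \<union> ?B) \<le> card {1..n}"
    by (rule card_mono) auto
  moreover have "?A \<inter> ?B = {i \<in> {1..n}. \<sigma> i = 1 \<and> \<sigma> (i + n) = 1}"
    by auto
  moreover have "card ?A \<le> card {1..n}" "card ?B \<le> card {1..n}"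
    "card (?A \<inter> ?B) \<le> card ?A" "card (?A \<inter> ?B) \<le> card ?B"
    by (rule card_mono; auto)+
  ultimately show ?thesis
    unfolding feasible_counts_def plus_cross_shift plus_V2_shift V1_def by simp
qed

definition spins_up_on :: "nat \<Rightarrow> nat set \<Rightarrow> nat \<Rightarrow> real" where
  "spins_up_on n S i = (if i \<in> V n then if i \<in> S then 1 else -1 else 0)"

lemma spins_up_on_C3:
  assumes "card (V1 n \<inter> S) = p1" and "card (V2 n \<inter> S) = p2"
    and "card {i \<in> {1..n}. i \<in> S \<and> i + n \<in> S} = a"
  shows "spins_up_on n S \<in> C3 n p1 p2 a"
proof -
  have "{i \<in> V1 n. spins_up_on n S i = 1} = V1 n \<inter> S" "{i \<in> V2 n. spins_up_on n S i = 1} = V2 n \<inter> S"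
    by (auto simp: spins_up_on_def V_def)
  moreover have "{i \<in> {1..n}. spins_up_on n S i = 1 \<and> spins_up_on n S (i + n) = 1}
      = {i \<in> {1..n}. i \<in> S \<and> i + n \<in> S}"
    by (auto simp: spins_up_on_def V_def V1_def V2_def)
  moreover have "spins_up_on n S \<in> configs n"
    by (auto simp: spins_up_on_def configs_def)
  ultimately show ?thesis
    using assms unfolding C3_def plus_cross_shift by simp
qed

lemma C3_nonempty_if_feasible:
  assumes "feasible_counts n p1 p2 a"
  shows "C3 n p1 p2 a \<noteq> {}"
proof -
  \<comment> \<open>The up spins of \<open>V2\<close> form a block shifted so that exactly \<open>a\<close> of them face up spins of \<open>V1\<close>.\<close>
  define k where "k = p1 - a"
  define S where "S = {1..p1} \<union> {n + k + 1..n + k + p2}"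
  have "V1 n \<inter> S = {1..p1}" "V2 n \<inter> S = {n + k + 1..n + k + p2}"
    "{i \<in> {1..n}. i \<in> S \<and> i + n \<in> S} = {k + 1..p1}"
    using assms by (auto simp: feasible_counts_def V1_def V2_def S_def k_def)
  then have "spins_up_on n S \<in> C3 n p1 p2 a"
    using assms by (intro spins_up_on_C3) (auto simp: feasible_counts_def k_def)
  then show ?thesis by blast
qed

lemma H_on_C3:
  assumes "\<sigma> \<in> C3 n p1 p2 a" and "n \<ge> 1"
  shows "H n \<epsilon> 0 \<sigma> = energy_of_counts n \<epsilon> p1 p2 a" and "\<sigma> \<in> Cp n (p1 + p2)"
  using assms H_eq_energy_of_counts[of \<sigma> n \<epsilon>] card_plus_V[of n \<sigma>] by (auto simp: C3_def Cp_def)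

lemma finite_H_image_Cp:
  assumes "n \<ge> 1"
  shows "finite (H n \<epsilon> 0 ` Cp n p)"
proof (rule finite_subset)
  show "H n \<epsilon> 0 ` Cp n p \<subseteq> (\<lambda>(p1, p2, a). energy_of_counts n \<epsilon> p1 p2 a) ` ({..n} \<times> {..n} \<times> {..n})"
  proof
    fix v assume "v \<in> H n \<epsilon> 0 ` Cp n p"
    then obtain \<sigma> where "\<sigma> \<in> configs n" and v: "v = H n \<epsilon> 0 \<sigma>"
      by (auto simp: Cp_def)
    then have "v = energy_of_counts n \<epsilon> (plus_V1 n \<sigma>) (plus_V2 n \<sigma>) (plus_cross n \<sigma>)"
      using H_eq_energy_of_counts assms by simp
    moreover have "(plus_V1 n \<sigma>, plus_V2 n \<sigma>, plus_cross n \<sigma>) \<in> {..n} \<times> {..n} \<times> {..n}"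
      using feasible_counts_of_config[of n \<sigma>] by (auto simp: feasible_counts_def)
    ultimately show "v \<in> (\<lambda>(p1, p2, a). energy_of_counts n \<epsilon> p1 p2 a) ` ({..n} \<times> {..n} \<times> {..n})"
      by force
  qed
qed simp

lemma Min_H_Cp_eq:
  assumes "n \<ge> 1" and "feasible_counts n p1 p2 a"
    and "\<And>q1 q2 b. feasible_counts n q1 q2 b \<Longrightarrow> q1 + q2 = p1 + p2
      \<Longrightarrow> energy_of_counts n \<epsilon> p1 p2 a \<le> energy_of_counts n \<epsilon> q1 q2 b"
  shows "Min (H n \<epsilon> 0 ` Cp n (p1 + p2)) = energy_of_counts n \<epsilon> p1 p2 a"
proof (rule Min_eqI[OF finite_H_image_Cp[OF assms(1)]])
  obtain \<sigma> where "\<sigma> \<in> C3 n p1 p2 a"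
    using C3_nonempty_if_feasible[OF assms(2)] by blast
  then show "energy_of_counts n \<epsilon> p1 p2 a \<in> H n \<epsilon> 0 ` Cp n (p1 + p2)"
    using H_on_C3[OF _ assms(1)] by (metis image_eqI)
next
  fix v assume "v \<in> H n \<epsilon> 0 ` Cp n (p1 + p2)"
  then obtain \<sigma> where \<sigma>: "\<sigma> \<in> configs n" "card {i \<in> V n. \<sigma> i = 1} = p1 + p2" and v: "v = H n \<epsilon> 0 \<sigma>"
    by (auto simp: Cp_def)
  show "energy_of_counts n \<epsilon> p1 p2 a \<le> v"
    unfolding v H_eq_energy_of_counts[OF \<sigma>(1) assms(1)]
    using assms(3)[OF feasible_counts_of_config] \<sigma>(2) card_plus_V by simp
qed

definition low_energy :: "nat \<Rightarrow> real \<Rightarrow> real \<Rightarrow> real" where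
  "low_energy n \<epsilon> x = real n - (x - real n)^2 - x^2 - \<epsilon> * (real n - 2 * x)"

lemma energy_of_counts_eq_low_energy:
  "energy_of_counts n \<epsilon> p1 p2 a = low_energy n \<epsilon> (real p1 + real p2) + 4 * real p1 * real p2 - 4 * \<epsilon> * real a"
  unfolding energy_of_counts_def low_energy_def power2_eq_square by algebra

lemma low_energy_le_energy_of_counts:
  assumes "a \<le> p1" and "a \<le> p2" and "\<epsilon> \<le> 1"
  shows "low_energy n \<epsilon> (real p1 + real p2) \<le> energy_of_counts n \<epsilon> p1 p2 a"
proof -
  have "a \<le> p1 * p2"
    using assms(1,2) by (cases "p2 = 0") (auto intro: le_trans[OF _ mult_le_mono2[of 1 p2 p1]])
  then have "real a \<le> real p1 * real p2"
    by (metis of_nat_le_iff of_nat_mult)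
  moreover have "\<epsilon> * real a \<le> real a"
    using mult_right_mono[OF assms(3), of "real a"] by simp
  ultimately have "\<epsilon> * real a \<le> real p1 * real p2"
    by linarith
  then show ?thesis
    unfolding energy_of_counts_eq_low_energy by linarith
qed

lemma energy_of_counts_flip:
  assumes "feasible_counts n p1 p2 a"
  shows "energy_of_counts n \<epsilon> (n - p1) (n - p2) (n + a - p1 - p2) = energy_of_counts n \<epsilon> p1 p2 a"
  using assms unfolding feasible_counts_def energy_of_counts_def
  by (simp add: of_nat_diff power2_eq_square algebra_simps)

lemma Min_H_Cp_le_half:
  assumes "n \<ge> 1" and "\<epsilon> \<le> 1" and "p \<le> n"
  shows "Min (H n \<epsilon> 0 ` Cp n p) = low_energy n \<epsilon> (real p)"
    and "\<forall>\<sigma> \<in> C3 n p 0 0 \<union> C3 n 0 p 0. H n \<epsilon> 0 \<sigma> = low_energy n \<epsilon> (real p)"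
proof -
  have ground: "energy_of_counts n \<epsilon> p 0 0 = low_energy n \<epsilon> (real p)"
    "energy_of_counts n \<epsilon> 0 p 0 = low_energy n \<epsilon> (real p)"
    by (simp_all add: energy_of_counts_eq_low_energy)
  have "Min (H n \<epsilon> 0 ` Cp n (p + 0)) = energy_of_counts n \<epsilon> p 0 0"
    using assms ground(1)
    by (intro Min_H_Cp_eq) (auto simp: feasible_counts_def low_energy_le_energy_of_counts)
  then show "Min (H n \<epsilon> 0 ` Cp n p) = low_energy n \<epsilon> (real p)"
    using ground(1) by simp
  show "\<forall>\<sigma> \<in> C3 n p 0 0 \<union> C3 n 0 p 0. H n \<epsilon> 0 \<sigma> = low_energy n \<epsilon> (real p)"
    using H_on_C3(1)[OF _ assms(1)] ground by auto
qed

lemma Min_H_Cp_ge_half: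
  assumes "n \<ge> 1" and "\<epsilon> \<le> 1" and "n \<le> p" and "p \<le> 2 * n"
  shows "Min (H n \<epsilon> 0 ` Cp n p) = low_energy n \<epsilon> (real (2 * n - p))"
    and "\<forall>\<sigma> \<in> C3 n n (p - n) (p - n) \<union> C3 n (p - n) n (p - n). H n \<epsilon> 0 \<sigma> = low_energy n \<epsilon> (real (2 * n - p))"
proof -
  have feasible: "feasible_counts n n (p - n) (p - n)" "feasible_counts n (p - n) n (p - n)"
    using assms(3,4) by (auto simp: feasible_counts_def)
  have ground: "energy_of_counts n \<epsilon> n (p - n) (p - n) = low_energy n \<epsilon> (real (2 * n - p))"
    "energy_of_counts n \<epsilon> (p - n) n (p - n) = low_energy n \<epsilon> (real (2 * n - p))"
    using energy_of_counts_flip[OF feasible(1), of \<epsilon>] energy_of_counts_flip[OF feasible(2), of \<epsilon>] assms(3,4)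
    by (simp_all add: energy_of_counts_eq_low_energy)
  have "Min (H n \<epsilon> 0 ` Cp n (n + (p - n))) = energy_of_counts n \<epsilon> n (p - n) (p - n)"
  proof (rule Min_H_Cp_eq[OF assms(1) feasible(1)])
    fix q1 q2 b assume q: "feasible_counts n q1 q2 b" "q1 + q2 = n + (p - n)"
    have "real (2 * n - p) = real (n - q1) + real (n - q2)"
      using q assms(3) by (auto simp: feasible_counts_def of_nat_diff)
    moreover have "n + b - q1 - q2 \<le> n - q1" "n + b - q1 - q2 \<le> n - q2"
      using q(1) by (auto simp: feasible_counts_def)
    ultimately have "low_energy n \<epsilon> (real (2 * n - p)) \<le> energy_of_counts n \<epsilon> (n - q1) (n - q2) (n + b - q1 - q2)"
      using low_energy_le_energy_of_counts[OF _ _ assms(2)] by simp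
    then show "energy_of_counts n \<epsilon> n (p - n) (p - n) \<le> energy_of_counts n \<epsilon> q1 q2 b"
      using ground(1) energy_of_counts_flip[OF q(1)] by simp
  qed
  then show "Min (H n \<epsilon> 0 ` Cp n p) = low_energy n \<epsilon> (real (2 * n - p))"
    using ground(1) assms(3) by simp
  show "\<forall>\<sigma> \<in> C3 n n (p - n) (p - n) \<union> C3 n (p - n) n (p - n). H n \<epsilon> 0 \<sigma> = low_energy n \<epsilon> (real (2 * n - p))"
    using H_on_C3(1)[OF _ assms(1)] ground by auto
qed

theorem proposition4p4:
  fixes n p :: nat and \<epsilon> h :: real
  assumes "n \<ge> 2" and "h = 0" and "-1 \<le> \<epsilon>" and "\<epsilon> \<le> 1" and "p \<le> 2 * n"
  shows "(p \<le> n \<longrightarrow>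
            Min (H n \<epsilon> h ` Cp n p) = real n - (real p - real n)^2 - (real p)^2 - \<epsilon> * (real n - 2 * real p)
          \<and> C3 n p 0 0 \<noteq> {} \<and> C3 n 0 p 0 \<noteq> {}
          \<and> (\<forall>\<sigma> \<in> C3 n p 0 0 \<union> C3 n 0 p 0. H n \<epsilon> h \<sigma> = Min (H n \<epsilon> h ` Cp n p)))
       \<and> (n \<le> p \<longrightarrow>
            Min (H n \<epsilon> h ` Cp n p) = real n - (2 * real n - real p)^2 - (real p - real n)^2 - \<epsilon> * (2 * real p - 3 * real n)
          \<and> C3 n n (p - n) (p - n) \<noteq> {} \<and> C3 n (p - n) n (p - n) \<noteq> {}
          \<and> (\<forall>\<sigma> \<in> C3 n n (p - n) (p - n) \<union> C3 n (p - n) n (p - n). H n \<epsilon> h \<sigma> = Min (H n \<epsilon> h ` Cp n p)))"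
proof -
  have n: "n \<ge> 1" using assms(1) by simp
  show ?thesis
  proof (intro conjI impI)
    assume "p \<le> n"
    note low = Min_H_Cp_le_half[OF n assms(4) this]
    show "Min (H n \<epsilon> h ` Cp n p) = real n - (real p - real n)^2 - (real p)^2 - \<epsilon> * (real n - 2 * real p)"
      using low(1) assms(2) by (simp add: low_energy_def)
    show "C3 n p 0 0 \<noteq> {}" "C3 n 0 p 0 \<noteq> {}"
      using \<open>p \<le> n\<close> by (auto intro!: C3_nonempty_if_feasible simp: feasible_counts_def)
    show "\<forall>\<sigma> \<in> C3 n p 0 0 \<union> C3 n 0 p 0. H n \<epsilon> h \<sigma> = Min (H n \<epsilon> h ` Cp n p)"
      using low assms(2) by simp
  next
    assume "n \<le> p"
    note high = Min_H_Cp_ge_half[OF n assms(4) this assms(5)]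
    show "Min (H n \<epsilon> h ` Cp n p) = real n - (2 * real n - real p)^2 - (real p - real n)^2 - \<epsilon> * (2 * real p - 3 * real n)"
      using high(1) assms(2,5) by (simp add: low_energy_def of_nat_diff power2_commute algebra_simps)
    show "C3 n n (p - n) (p - n) \<noteq> {}" "C3 n (p - n) n (p - n) \<noteq> {}"
      using \<open>n \<le> p\<close> assms(5) by (auto intro!: C3_nonempty_if_feasible simp: feasible_counts_def)
    show "\<forall>\<sigma> \<in> C3 n n (p - n) (p - n) \<union> C3 n (p - n) n (p - n). H n \<epsilon> h \<sigma> = Min (H n \<epsilon> h ` Cp n p)"
      using high assms(2) by simp
  qed
qed

end
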